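(* Let $S$ be a finite set of more than $6$ points in the plane in general position with distinct $x$-coordinates. Let $L$, $R$, $T$ be respectively the leftmost, rightmost and topmost points of $S$. Let $p\in S$, and let $r\in S\setminus\{p\}$ (the clockwise neighbor of $p$) be the point minimizing the clockwise angle from the upward vertical ray at $p$ to the ray $\overrightarrow{pr}$, and $q\in S\setminus\{p\}$ (the counterclockwise neighbor of $p$) the point minimizing the counterclockwise angle from the upward vertical ray at $p$ to the ray $\overrightarrow{pq}$. If either of the point sequences $[L,q,p,r,T,R]$ or $[T,q,p,r,R,L]$ is a convex chain, then $p$ is a vertex of the upper hull of $S$.
   Context: A sequence of points is a convex chain if every three consecutive points of the sequence make a right (clockwise) turn. The upper hull of $S$ is the part of the boundary of the convex hull of $S$ lying on or above the segment from the leftmost to the rightmost point. *)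

theory Defs
  imports "HOL-Analysis.Analysis"
begin

type_synonym pt = "real \<times> real"

text \<open>Orientation (twice the signed area); negative means a right (clockwise) turn.\<close>
definition orient :: "pt \<Rightarrow> pt \<Rightarrow> pt \<Rightarrow> real" where
  "orient a b c = (fst b - fst a) * (snd c - snd a) - (snd b - snd a) * (fst c - fst a)"

definition right_turn :: "pt \<Rightarrow> pt \<Rightarrow> pt \<Rightarrow> bool" where
  "right_turn a b c \<longleftrightarrow> orient a b c < 0"

definition convex_chain :: "pt list \<Rightarrow> bool" where
  "convex_chain xs \<longleftrightarrow> (\<forall>i. i + 2 < length xs \<longrightarrow> right_turn (xs ! i) (xs ! (i+1)) (xs ! (i+2)))"

definition general_position :: "pt set \<Rightarrow> bool" where
  "general_position S \<longleftrightarrow>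
     (\<forall>a\<in>S. \<forall>b\<in>S. \<forall>c\<in>S. a \<noteq> b \<and> b \<noteq> c \<and> a \<noteq> c \<longrightarrow> orient a b c \<noteq> 0)"

definition norm_angle :: "real \<Rightarrow> real" where
  "norm_angle t = (if t < 0 then t + 2 * pi else t)"

definition vec_c :: "pt \<Rightarrow> pt \<Rightarrow> complex" where
  "vec_c p r = Complex (fst r - fst p) (snd r - snd p)"

text \<open>Clockwise angle in [0,2pi) from the upward vertical ray at p to the ray p->r.\<close>
definition cw_angle :: "pt \<Rightarrow> pt \<Rightarrow> real" where
  "cw_angle p r = norm_angle (Arg (\<i> / vec_c p r))"

text \<open>Counterclockwise angle in [0,2pi) from the upward vertical ray at p to the ray p->q.\<close>
definition ccw_angle :: "pt \<Rightarrow> pt \<Rightarrow> real" where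
  "ccw_angle p q = norm_angle (Arg (vec_c p q / \<i>))"

text \<open>p is a vertex of the upper hull: an extreme point of conv S lying on or above segment LR.\<close>
definition upper_hull_vertex :: "pt set \<Rightarrow> pt \<Rightarrow> pt \<Rightarrow> pt \<Rightarrow> bool" where
  "upper_hull_vertex S L R p \<longleftrightarrow> p extreme_point_of (convex hull S) \<and> orient L R p \<ge> 0"

end

theory Submission
  imports Defs
begin

text \<open>
  The convex chain forces a right turn \<open>q, p, r\<close>. By the choice of \<open>q\<close> and \<open>r\<close> as the angular
  neighbours of \<open>p\<close>, every other point of \<open>S\<close> lies in the closed angular sector at \<open>p\<close>
  swept counterclockwise from \<open>pq\<close> to \<open>pr\<close>, and the right turn makes this sector narrower
  than a half-plane. A line through \<open>p\<close> parallel to \<open>qr\<close> therefore separates \<open>p\<close> from the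
  remaining points, so \<open>p\<close> is extreme. Since \<open>L\<close> lies to the left and \<open>R\<close> to the right of
  \<open>p\<close>, both lie in this sector, which puts \<open>p\<close> on or above the segment \<open>LR\<close>.
\<close>

lemma orient_rotate: "orient a b c = orient b c a"
  unfolding orient_def by (simp add: algebra_simps)

lemma right_turn_iff_orient_pos: "right_turn a b c \<longleftrightarrow> orient b a c > 0"
  unfolding right_turn_def orient_def by (auto simp: algebra_simps)

lemma orient_add_eq_inner:
  "orient p q x + orient p x r = inner (snd r - snd q, fst q - fst r) (x - p)"
  unfolding orient_def by (simp add: inner_prod_def algebra_simps)

lemma convex_chain_right_turn:
  "convex_chain xs \<Longrightarrow> i + 2 < length xs \<Longrightarrow> right_turn (xs ! i) (xs ! (i + 1)) (xs ! (i + 2))"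
  unfolding convex_chain_def by blast

lemma cmod_vec_c_pos: "s \<noteq> p \<Longrightarrow> cmod (vec_c p s) > 0"
  by (cases s, cases p) (auto simp: vec_c_def complex_eq_iff)

lemma norm_angle_bounded: "- pi < t \<Longrightarrow> t \<le> pi \<Longrightarrow> 0 \<le> norm_angle t \<and> norm_angle t < 2 * pi"
  unfolding norm_angle_def by auto

lemma sin_norm_angle: "sin (norm_angle t) = sin t"
  and cos_norm_angle: "cos (norm_angle t) = cos t"
  unfolding norm_angle_def by (auto simp: sin_add cos_add)

lemma ccw_angle_bounded: "0 \<le> ccw_angle p s \<and> ccw_angle p s < 2 * pi"
  unfolding ccw_angle_def using Arg_bounded norm_angle_bounded by blast

lemma fst_diff_ccw_angle: "fst s - fst p = - cmod (vec_c p s) * sin (ccw_angle p s)"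
  and snd_diff_ccw_angle: "snd s - snd p = cmod (vec_c p s) * cos (ccw_angle p s)"
proof -
  define z where "z = vec_c p s / \<i>"
  have "rcis (cmod z) (Arg z) = z"
    by (rule rcis_cmod_Arg)
  then have "Re z = cmod z * cos (Arg z)" "Im z = cmod z * sin (Arg z)"
    by (metis Re_rcis, metis Im_rcis)
  moreover have "cmod z = cmod (vec_c p s)"
    by (simp add: z_def norm_divide norm_mult)
  ultimately show "fst s - fst p = - cmod (vec_c p s) * sin (ccw_angle p s)"
    and "snd s - snd p = cmod (vec_c p s) * cos (ccw_angle p s)"
    unfolding ccw_angle_def sin_norm_angle cos_norm_angle z_def[symmetric]
    by (auto simp: z_def vec_c_def)
qed

lemma cw_angle_eq_ccw_angle:
  "cw_angle p s = (if ccw_angle p s = 0 then 0 else 2 * pi - ccw_angle p s)"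
proof -
  define z where "z = vec_c p s / \<i>"
  have "\<i> / vec_c p s = inverse z"
    by (simp add: z_def divide_inverse mult.commute)
  then have cw: "cw_angle p s = norm_angle (if z \<in> \<real> then Arg z else - Arg z)"
    unfolding cw_angle_def by (simp add: Arg_inverse)
  have ccw: "ccw_angle p s = norm_angle (Arg z)"
    unfolding ccw_angle_def z_def ..
  show ?thesis
  proof (cases "z \<in> \<real>")
    case True
    then have "Arg z = 0 \<or> Arg z = pi"
      by (cases "0 \<le> Re z") (simp_all add: Arg_eq_0 Arg_eq_pi complex_is_Real_iff)
    then show ?thesis
      using True cw ccw by (auto simp: norm_angle_def)
  next
    case False
    then have "Arg z \<noteq> 0" "Arg z \<noteq> pi"
      using Arg_eq_0 Arg_eq_pi complex_is_Real_iff by auto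
    then show ?thesis
      using False cw ccw Arg_bounded[of z] by (auto simp: norm_angle_def)
  qed
qed

lemma orient_eq_sin_ccw_angle_diff:
  "orient p a b = cmod (vec_c p a) * cmod (vec_c p b) * sin (ccw_angle p b - ccw_angle p a)"
  unfolding orient_def fst_diff_ccw_angle snd_diff_ccw_angle sin_diff
  by (simp add: algebra_simps)

lemma sin_pos_imp_less_pi:
  assumes "0 \<le> x" "x < 2 * pi" "sin x > 0"
  shows "0 < x \<and> x < pi"
proof -
  have "x \<noteq> 0" "\<not> pi \<le> x"
    using assms sin_le_zero[of x] by auto
  then show ?thesis
    using assms(1) by linarith
qed

lemma orient_pos_iff_ccw_angle_diff:
  assumes "a \<noteq> p" "b \<noteq> p" "ccw_angle p a \<le> ccw_angle p b"
  shows "orient p a b > 0 \<longleftrightarrow> 0 < ccw_angle p b - ccw_angle p a \<and> ccw_angle p b - ccw_angle p a < pi"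
proof -
  have "cmod (vec_c p a) * cmod (vec_c p b) > 0"
    using cmod_vec_c_pos assms(1,2) by simp
  then have "orient p a b > 0 \<longleftrightarrow> sin (ccw_angle p b - ccw_angle p a) > 0"
    unfolding orient_eq_sin_ccw_angle_diff by (metis mult_pos_pos zero_less_mult_pos)
  moreover have "0 \<le> ccw_angle p b - ccw_angle p a" "ccw_angle p b - ccw_angle p a < 2 * pi"
    using assms(3) ccw_angle_bounded[of p a] ccw_angle_bounded[of p b] by auto
  ultimately show ?thesis
    using sin_pos_imp_less_pi sin_gt_zero by blast
qed

lemma orient_nonneg_if_ccw_angle_diff:
  assumes "0 \<le> ccw_angle p b - ccw_angle p a" "ccw_angle p b - ccw_angle p a < pi"
  shows "orient p a b \<ge> 0"
    and "orient p a b = 0 \<Longrightarrow> a \<noteq> p \<Longrightarrow> b \<noteq> p \<Longrightarrow> ccw_angle p a = ccw_angle p b"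
proof -
  have "sin (ccw_angle p b - ccw_angle p a) \<ge> 0"
    using assms by (simp add: sin_ge_zero)
  then show "orient p a b \<ge> 0"
    unfolding orient_eq_sin_ccw_angle_diff by simp
  assume "orient p a b = 0" "a \<noteq> p" "b \<noteq> p"
  then have "sin (ccw_angle p b - ccw_angle p a) = 0"
    using cmod_vec_c_pos unfolding orient_eq_sin_ccw_angle_diff by simp
  then have "ccw_angle p b - ccw_angle p a = 0"
    by (rule sin_eq_0_pi[rotated 2]) (use assms in auto)
  then show "ccw_angle p a = ccw_angle p b"
    by simp
qed

lemma ccw_angle_less_pi_if_left:
  assumes "fst s < fst p"
  shows "ccw_angle p s < pi"
proof -
  have "cmod (vec_c p s) * sin (ccw_angle p s) > 0"
    using fst_diff_ccw_angle[of s p] assms by linarith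
  then have "sin (ccw_angle p s) > 0"
    by (simp add: zero_less_mult_iff)
  then show ?thesis
    using sin_pos_imp_less_pi ccw_angle_bounded by blast
qed

lemma ccw_angle_greater_pi_if_right:
  assumes "fst p < fst s"
  shows "pi < ccw_angle p s"
proof -
  have "cmod (vec_c p s) * sin (ccw_angle p s) < 0"
    using fst_diff_ccw_angle[of s p] assms by linarith
  then have "sin (ccw_angle p s) < 0"
    by (simp add: mult_less_0_iff)
  then show ?thesis
    using sin_ge_zero[of "ccw_angle p s"] ccw_angle_bounded[of p s] by (meson not_le)
qed

lemma ccw_angle_sector_of_neighbours:
  assumes "p \<notin> A" and "q \<in> A" and q_min: "\<forall>s\<in>A. ccw_angle p q \<le> ccw_angle p s"
    and "r \<in> A" and r_min: "\<forall>s\<in>A. cw_angle p r \<le> cw_angle p s"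
    and "orient p q r > 0"
  shows "0 < ccw_angle p r - ccw_angle p q" and "ccw_angle p r - ccw_angle p q < pi"
    and "\<And>s. s \<in> A \<Longrightarrow> ccw_angle p q \<le> ccw_angle p s \<and> ccw_angle p s \<le> ccw_angle p r"
proof -
  have qr: "ccw_angle p q \<le> ccw_angle p r" and "q \<noteq> p" "r \<noteq> p"
    using assms(1,2,4) q_min by auto
  then show diff: "0 < ccw_angle p r - ccw_angle p q" "ccw_angle p r - ccw_angle p q < pi"
    using orient_pos_iff_ccw_angle_diff \<open>orient p q r > 0\<close> by blast+
  fix s assume "s \<in> A"
  have "ccw_angle p r \<noteq> 0"
    using diff ccw_angle_bounded[of p q] by linarith
  \<comment> \<open>hence \<open>cw_angle p r > 0\<close>, so \<open>ccw_angle p s \<noteq> 0\<close> and both clockwise angles are \<open>2 pi\<close> minus the counterclockwise ones\<close>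
  then show "ccw_angle p q \<le> ccw_angle p s \<and> ccw_angle p s \<le> ccw_angle p r"
    using r_min q_min \<open>s \<in> A\<close> ccw_angle_bounded[of p r] cw_angle_eq_ccw_angle[of p r]
      cw_angle_eq_ccw_angle[of p s]
    by (auto split: if_splits)
qed

lemma orient_pos_in_sector:
  assumes "s \<noteq> p" "q \<noteq> p" "r \<noteq> p"
    and "ccw_angle p q \<le> ccw_angle p s" "ccw_angle p s \<le> ccw_angle p r"
    and "0 < ccw_angle p r - ccw_angle p q" "ccw_angle p r - ccw_angle p q < pi"
  shows "orient p q s + orient p s r > 0"
  using orient_nonneg_if_ccw_angle_diff[of p s q] orient_nonneg_if_ccw_angle_diff[of p r s] assms
  by fastforce

lemma extreme_point_of_convex_hull_if_separated:
  fixes S :: "'a::real_inner set"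
  assumes "finite S" "p \<in> S" "\<And>s. s \<in> S - {p} \<Longrightarrow> inner a (s - p) > 0"
  shows "p extreme_point_of (convex hull S)"
proof -
  have "convex hull (S - {p}) \<subseteq> {x. inner a p < inner a x}"
    by (rule hull_minimal) (use assms(3) convex_halfspace_gt in \<open>auto simp: inner_diff_right\<close>)
  then have "p \<notin> convex hull (S - {p})"
    by auto
  then show ?thesis
    using extreme_point_of_convex_hull_insert[of "S - {p}" p] assms(1,2)
    by (simp add: insert_absorb)
qed

theorem lemma2:
  fixes S :: "pt set" and L R T p q r :: pt
  assumes "finite S" and "card S > 6"
    and "general_position S"
    and "inj_on fst S"
    and "L \<in> S" and "\<forall>s\<in>S. fst L \<le> fst s"
    and "R \<in> S" and "\<forall>s\<in>S. fst s \<le> fst R"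
    and "T \<in> S" and "\<forall>s\<in>S. snd s \<le> snd T"
    and "p \<in> S"
    and "r \<in> S - {p}" and "\<forall>s\<in>S - {p}. cw_angle p r \<le> cw_angle p s"
    and "q \<in> S - {p}" and "\<forall>s\<in>S - {p}. ccw_angle p q \<le> ccw_angle p s"
    and "convex_chain [L, q, p, r, T, R] \<or> convex_chain [T, q, p, r, R, L]"
  shows "upper_hull_vertex S L R p"
proof -
  have "right_turn q p r"
    using assms(16) convex_chain_right_turn[of "[L, q, p, r, T, R]" 1]
      convex_chain_right_turn[of "[T, q, p, r, R, L]" 1]
    by auto
  then have "orient p q r > 0"
    by (simp add: right_turn_iff_orient_pos)
  then have sector: "0 < ccw_angle p r - ccw_angle p q" "ccw_angle p r - ccw_angle p q < pi"
      "\<And>s. s \<in> S - {p} \<Longrightarrow> ccw_angle p q \<le> ccw_angle p s \<and> ccw_angle p s \<le> ccw_angle p r"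
    using ccw_angle_sector_of_neighbours[of p "S - {p}" q r, OF _ assms(14,15,12,13)] by simp_all
  have "p extreme_point_of (convex hull S)"
  proof (rule extreme_point_of_convex_hull_if_separated[OF assms(1,11)])
    fix s assume "s \<in> S - {p}"
    then have "orient p q s + orient p s r > 0"
      using orient_pos_in_sector[of s p q r] sector(1,2) sector(3)[of s] assms(12,14) by simp
    then show "inner (snd r - snd q, fst q - fst r) (s - p) > 0"
      by (simp only: orient_add_eq_inner)
  qed
  moreover have "orient L R p \<ge> 0"
  proof (cases "L = p \<or> R = p")
    case True
    then show ?thesis by (auto simp: orient_def)
  next
    case False
    then have "L \<noteq> p" "R \<noteq> p" "L \<in> S - {p}" "R \<in> S - {p}"
      using assms(5,7) by auto
    then have "fst L \<noteq> fst p" "fst R \<noteq> fst p"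
      using inj_on_eq_iff[OF assms(4)] assms(5,7,11) by auto
    then have "fst L < fst p" "fst p < fst R"
      using bspec[OF assms(6) assms(11)] bspec[OF assms(8) assms(11)] by linarith+
    then have "ccw_angle p L < pi" "pi < ccw_angle p R"
      using ccw_angle_less_pi_if_left ccw_angle_greater_pi_if_right by auto
    moreover have "ccw_angle p q \<le> ccw_angle p L" "ccw_angle p R \<le> ccw_angle p r"
      using sector(3) \<open>L \<in> S - {p}\<close> \<open>R \<in> S - {p}\<close> by auto
    ultimately have "0 < ccw_angle p R - ccw_angle p L" "ccw_angle p R - ccw_angle p L < pi"
      using sector(2) by linarith+
    then have "orient p L R > 0"
      using orient_pos_iff_ccw_angle_diff[of L p R] \<open>L \<noteq> p\<close> \<open>R \<noteq> p\<close> by simp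
    then show ?thesis
      using orient_rotate[of p L R] by simp
  qed
  ultimately show ?thesis
    unfolding upper_hull_vertex_def by blast
qed

end
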